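(* Let $b:\mathbb{D}\to\mathbb{D}$ be analytic and let $\Omega$ be an approach region at $1$. If the kernels $k^b_z$ converge in the norm of $\mathcal{H}(b)$ (to the boundary kernel $k^b_1$) as $z\to1$ in $\Omega$, then the limits $b'(1)=\lim_{z\to1,\,z\in\Omega}b'(z)$ and $b(1)=\lim_{z\to1,\,z\in\Omega}b(z)$ exist, and $|b(1)|=1$.
   Context: $\mathcal{H}(b)$ is the reproducing kernel Hilbert space of analytic functions on the unit disk $\mathbb{D}$ with reproducing kernel $k^b_z(w)=\frac{1-\overline{b(z)}b(w)}{1-\overline{z}w}$. An approach region at $1$ is an open simply connected domain $\Omega\subset\mathbb{D}$ with $\partial\Omega\cap\mathbb{T}=\{1\}$ such that for all $z\in\Omega$ sufficiently close to $1$ the segment between $z$ and $1$ lies in $\Omega$. *)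

theory Defs
  imports "HOL-Complex_Analysis.Complex_Analysis"
begin

text \<open>The de Branges--Rovnyak kernel: hb_kernel b w z = k^b_w(z).\<close>
definition hb_kernel :: "(complex \<Rightarrow> complex) \<Rightarrow> complex \<Rightarrow> complex \<Rightarrow> complex" where
  "hb_kernel b w z = (1 - cnj (b w) * b z) / (1 - cnj w * z)"

definition psd_kernel_on :: "complex set \<Rightarrow> (complex \<Rightarrow> complex \<Rightarrow> complex) \<Rightarrow> bool" where
  "psd_kernel_on S M \<longleftrightarrow>
     (\<forall>n::nat. \<forall>z a. (\<forall>i<n. z i \<in> S) \<longrightarrow>
        Re (\<Sum>i<n. \<Sum>j<n. cnj (a i) * a j * M (z i) (z j)) \<ge> 0 \<and>
        Im (\<Sum>i<n. \<Sum>j<n. cnj (a i) * a j * M (z i) (z j)) = 0)"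

text \<open>Reproducing kernel Hilbert space H(K) on the unit disc, via Aronszajn's
  characterisation: f \<in> H(K) with norm \<le> c iff c^2 K(x,y) - f(x) conj(f(y)) is
  positive semidefinite, where K(x,y) = k_y(x) = K' y x.\<close>
definition rkhs_bound :: "(complex \<Rightarrow> complex \<Rightarrow> complex) \<Rightarrow> (complex \<Rightarrow> complex) \<Rightarrow> real \<Rightarrow> bool" where
  "rkhs_bound K f c \<longleftrightarrow> c \<ge> 0 \<and>
     psd_kernel_on (ball 0 1) (\<lambda>x y. complex_of_real (c\<^sup>2) * K y x - f x * cnj (f y))"

definition in_rkhs :: "(complex \<Rightarrow> complex \<Rightarrow> complex) \<Rightarrow> (complex \<Rightarrow> complex) \<Rightarrow> bool" where
  "in_rkhs K f \<longleftrightarrow> (\<exists>c. rkhs_bound K f c)"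

definition rkhs_norm :: "(complex \<Rightarrow> complex \<Rightarrow> complex) \<Rightarrow> (complex \<Rightarrow> complex) \<Rightarrow> real" where
  "rkhs_norm K f = Inf {c. rkhs_bound K f c}"

definition approach_region_at_1 :: "complex set \<Rightarrow> bool" where
  "approach_region_at_1 \<Omega> \<longleftrightarrow> open \<Omega> \<and> \<Omega> \<noteq> {} \<and> simply_connected \<Omega> \<and> \<Omega> \<subseteq> ball 0 1 \<and>
     frontier \<Omega> \<inter> sphere 0 1 = {1} \<and>
     (\<exists>\<delta>>0. \<forall>z\<in>\<Omega>. cmod (z - 1) < \<delta> \<longrightarrow> closed_segment z 1 - {1} \<subseteq> \<Omega>)"

end

theory Submission
  imports Defs
begin

(* Positivity of the de Branges-Rovnyak kernel (Pick's theorem, proved by the Schur algorithm)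
   makes point evaluation bounded on H(b): |f(x)| <= ||f|| k(x,x)^(1/2).  If k_z converges to g
   as z -> 1 in Omega, then k(z,z) stays bounded, so |b(z)| -> 1; evaluating k_z at a point
   where b does not vanish gives the limit b(1), and then g(x) = (1 - conj b(1) b(x)) / (1 - x).
   Since g(z) - conj g(w) is a difference of kernel errors, g(z) converges as well.  Finally
   y |-> (1 - conj z y) (k_z(y) - g(y)) is holomorphic and, by a Harnack inequality comparing
   k(y,y) with k(z,z), is o(1 - |z|) on the circle |y - z| = (1 - |z|) / 2; by Cauchy's estimate
   its derivative at z tends to 0.  That derivative is (b'(z) - b(1) g(z)) times a coefficient
   of modulus >= 1/2 plus a term tending to 0, so b'(z) converges. *)

section \<open>Quadratic forms of kernels on the disc\<close>

(* With the convention K y x = k_y(x) of Defs, this is the squared norm of the sum of a j k_(z j). *)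
definition kernel_form :: "(complex \<Rightarrow> complex \<Rightarrow> complex) \<Rightarrow> nat \<Rightarrow> (nat \<Rightarrow> complex) \<Rightarrow> (nat \<Rightarrow> complex) \<Rightarrow> complex"
  where "kernel_form K n z a = (\<Sum>i<n. \<Sum>j<n. cnj (a i) * a j * K (z j) (z i))"

lemma kernel_form_cong:
  assumes "\<And>i j. i < n \<Longrightarrow> j < n \<Longrightarrow> K (z j) (z i) = K' (z j) (z i)"
  shows "kernel_form K n z a = kernel_form K' n z a"
  unfolding kernel_form_def using assms by (intro sum.cong refl) auto

lemma kernel_form_Suc_zero: "a n = 0 \<Longrightarrow> kernel_form K (Suc n) z a = kernel_form K n z a"
  unfolding kernel_form_def by (simp add: sum.distrib)

lemma kernel_form_linear:
  "kernel_form (\<lambda>y x. c * K y x + d * L y x) n z a = c * kernel_form K n z a + d * kernel_form L n z a"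
  unfolding kernel_form_def by (simp add: algebra_simps sum.distrib sum_distrib_left)

lemma kernel_form_rank_one:
  "kernel_form (\<lambda>y x. cnj (U y) * U x) n z a = of_real ((cmod (\<Sum>j<n. a j * cnj (U (z j))))\<^sup>2)"
proof -
  have "kernel_form (\<lambda>y x. cnj (U y) * U x) n z a
      = (\<Sum>i<n. cnj (a i) * U (z i)) * (\<Sum>j<n. a j * cnj (U (z j)))"
    unfolding kernel_form_def sum_product by (intro sum.cong refl) (simp add: algebra_simps)
  also have "\<dots> = cnj (\<Sum>j<n. a j * cnj (U (z j))) * (\<Sum>j<n. a j * cnj (U (z j)))"
    by simp
  finally show ?thesis by (metis complex_norm_square mult.commute)
qed

lemma kernel_form_weighted:
  "kernel_form (\<lambda>y x. cnj (V y) * V x * K y x) n z a = kernel_form K n z (\<lambda>j. a j * cnj (V (z j)))"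
  unfolding kernel_form_def by (intro sum.cong refl) (simp add: algebra_simps)

lemma kernel_form_extend:
  "kernel_form K (Suc n) (z(n := w)) (a(n := t)) = kernel_form K n z a
     + t * (\<Sum>i<n. cnj (a i) * K w (z i)) + cnj t * (\<Sum>j<n. a j * K (z j) w) + cnj t * t * K w w"
proof -
  have "kernel_form K n (z(n := w)) (a(n := t)) = kernel_form K n z a"
    unfolding kernel_form_def by (intro sum.cong refl) auto
  moreover have "(\<Sum>i<n. cnj ((a(n := t)) i) * t * K w ((z(n := w)) i)) = t * (\<Sum>i<n. cnj (a i) * K w (z i))"
    by (simp add: sum_distrib_left) (intro sum.cong refl, auto simp: algebra_simps)
  moreover have "(\<Sum>j<n. cnj t * (a(n := t)) j * K ((z(n := w)) j) w) = cnj t * (\<Sum>j<n. a j * K (z j) w)"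
    by (simp add: sum_distrib_left) (intro sum.cong refl, auto simp: algebra_simps)
  ultimately show ?thesis
    unfolding kernel_form_def sum.lessThan_Suc sum.distrib by (simp add: algebra_simps)
qed

lemma cnj_kernel_form:
  assumes "\<And>x y. cnj (K x y) = K y x"
  shows "cnj (kernel_form K n z a) = kernel_form K n z a"
proof -
  have "cnj (kernel_form K n z a) = (\<Sum>i<n. \<Sum>j<n. a i * cnj (a j) * K (z i) (z j))"
    unfolding kernel_form_def by (simp add: assms)
  also have "\<dots> = kernel_form K n z a"
    unfolding kernel_form_def by (subst sum.swap) (simp add: mult.commute mult.left_commute)
  finally show ?thesis .
qed

lemma rkhs_bound_nonneg: "rkhs_bound K f c \<Longrightarrow> c \<ge> 0"
  unfolding rkhs_bound_def by simp

lemma rkhs_bound_less_of_rkhs_norm_less: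
  assumes "in_rkhs K f" "rkhs_norm K f < e"
  obtains c where "rkhs_bound K f c" "c < e"
  using assms cInf_lessD[of "{c. rkhs_bound K f c}" e]
  unfolding in_rkhs_def rkhs_norm_def by blast

locale disc_psd_kernel =
  fixes K :: "complex \<Rightarrow> complex \<Rightarrow> complex"
  assumes cnj_kernel: "cnj (K x y) = K y x"
    and kernel_form_nonneg: "\<forall>i<n. z i \<in> ball 0 1 \<Longrightarrow> 0 \<le> Re (kernel_form K n z a)"
begin

lemma Im_kernel_form: "Im (kernel_form K n z a) = 0"
  using cnj_kernel_form[of K n z a] cnj_kernel by (simp add: complex_eq_iff)

lemma rkhs_bound_iff:
  "rkhs_bound K f c \<longleftrightarrow> c \<ge> 0 \<and> (\<forall>n z a. (\<forall>i<n. z i \<in> ball 0 1) \<longrightarrow>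
      (cmod (\<Sum>i<n. cnj (a i) * f (z i)))\<^sup>2 \<le> c\<^sup>2 * Re (kernel_form K n z a))"
proof -
  have "(\<Sum>i<n. \<Sum>j<n. cnj (a i) * a j * (of_real (c\<^sup>2) * K (z j) (z i) - f (z i) * cnj (f (z j))))
      = kernel_form (\<lambda>y x. of_real (c\<^sup>2) * K y x + (- 1) * (cnj (f y) * f x)) n z a" for n z a
    unfolding kernel_form_def by (intro sum.cong refl) (simp add: algebra_simps)
  also have "\<dots> n z a = of_real (c\<^sup>2) * kernel_form K n z a - of_real ((cmod (\<Sum>i<n. cnj (a i) * f (z i)))\<^sup>2)" for n z a
  proof -
    have "cmod (\<Sum>j<n. a j * cnj (f (z j))) = cmod (\<Sum>i<n. cnj (a i) * f (z i))"
      by (metis (no_types, lifting) complex_cnj_cnj complex_cnj_mult complex_mod_cnj cnj_sum sum.cong)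
    then show ?thesis unfolding kernel_form_linear kernel_form_rank_one by simp
  qed
  finally show ?thesis
    unfolding rkhs_bound_def psd_kernel_on_def using Im_kernel_form by auto
qed

lemma norm_sum_le_rkhs_bound:
  assumes "rkhs_bound K f c" "\<forall>i<n. z i \<in> ball 0 1"
  shows "cmod (\<Sum>i<n. cnj (a i) * f (z i)) \<le> c * sqrt (Re (kernel_form K n z a))"
proof (rule power2_le_imp_le)
  have "0 \<le> Re (kernel_form K n z a)" using kernel_form_nonneg[OF assms(2)] .
  then show "(cmod (\<Sum>i<n. cnj (a i) * f (z i)))\<^sup>2 \<le> (c * sqrt (Re (kernel_form K n z a)))\<^sup>2"
    using assms unfolding rkhs_bound_iff by (simp add: power_mult_distrib)
  show "0 \<le> c * sqrt (Re (kernel_form K n z a))"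
    using rkhs_bound_nonneg[OF assms(1)] kernel_form_nonneg[OF assms(2)] by simp
qed

lemma kernel_diag_real:
  assumes "x \<in> ball 0 1"
  shows "K x x = of_real (Re (K x x))" and "Re (K x x) \<ge> 0"
proof -
  have "kernel_form K 1 (\<lambda>_. x) (\<lambda>_. 1) = K x x"
    unfolding kernel_form_def by simp
  then show "K x x = of_real (Re (K x x))" "Re (K x x) \<ge> 0"
    using Im_kernel_form[of 1 "\<lambda>_. x" "\<lambda>_. 1"] kernel_form_nonneg[of 1 "\<lambda>_. x" "\<lambda>_. 1"] assms
    by (auto simp: complex_eq_iff)
qed

lemma norm_le_rkhs_bound:
  assumes "rkhs_bound K f c" "x \<in> ball 0 1"
  shows "cmod (f x) \<le> c * sqrt (Re (K x x))"
  using norm_sum_le_rkhs_bound[OF assms(1), of 1 "\<lambda>_. x" "\<lambda>_. 1"] assms(2)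
  by (simp add: kernel_form_def)

lemma rkhs_bound_add:
  assumes f: "rkhs_bound K f c" and h: "rkhs_bound K h d"
  shows "rkhs_bound K (\<lambda>x. f x + h x) (c + d)"
  unfolding rkhs_bound_iff
proof (intro conjI allI impI)
  show "0 \<le> c + d" using rkhs_bound_nonneg[OF f] rkhs_bound_nonneg[OF h] by simp
  fix n :: nat and z a :: "nat \<Rightarrow> complex" assume z: "\<forall>i<n. z i \<in> ball 0 1"
  define R where "R = Re (kernel_form K n z a)"
  have "R \<ge> 0" unfolding R_def using kernel_form_nonneg[OF z] .
  have "cmod (\<Sum>i<n. cnj (a i) * (f (z i) + h (z i)))
      \<le> cmod (\<Sum>i<n. cnj (a i) * f (z i)) + cmod (\<Sum>i<n. cnj (a i) * h (z i))"
    unfolding distrib_left sum.distrib by (rule norm_triangle_ineq)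
  also have "\<dots> \<le> (c + d) * sqrt R"
    unfolding R_def distrib_right by (intro add_mono norm_sum_le_rkhs_bound[OF f z] norm_sum_le_rkhs_bound[OF h z])
  finally have "(cmod (\<Sum>i<n. cnj (a i) * (f (z i) + h (z i))))\<^sup>2 \<le> ((c + d) * sqrt R)\<^sup>2"
    by (rule power_mono) simp
  then show "(cmod (\<Sum>i<n. cnj (a i) * (f (z i) + h (z i))))\<^sup>2 \<le> (c + d)\<^sup>2 * R"
    using \<open>R \<ge> 0\<close> by (simp add: power_mult_distrib)
qed

lemma rkhs_bound_uminus: "rkhs_bound K f c \<Longrightarrow> rkhs_bound K (\<lambda>x. - f x) c"
  unfolding rkhs_bound_iff by (simp add: sum_negf)

lemma rkhs_bound_diff:
  "rkhs_bound K f c \<Longrightarrow> rkhs_bound K h d \<Longrightarrow> rkhs_bound K (\<lambda>x. f x - h x) (c + d)"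
  using rkhs_bound_add[OF _ rkhs_bound_uminus] by simp

lemma rkhs_bound_kernel:
  assumes w: "w \<in> ball 0 1" and pos: "Re (K w w) > 0"
  shows "rkhs_bound K (K w) (sqrt (Re (K w w)))"
  unfolding rkhs_bound_iff
proof (intro conjI allI impI)
  define \<kappa> where "\<kappa> = Re (K w w)"
  show "0 \<le> sqrt \<kappa>" using pos \<kappa>_def by simp
  fix n :: nat and z a :: "nat \<Rightarrow> complex" assume z: "\<forall>i<n. z i \<in> ball 0 1"
  define F where "F = (\<Sum>i<n. cnj (a i) * K w (z i))"
  have Fcnj: "(\<Sum>j<n. a j * K (z j) w) = cnj F"
    unfolding F_def by (simp add: cnj_kernel)
  have diag: "K w w = of_real \<kappa>"
    unfolding \<kappa>_def by (rule kernel_diag_real(1)[OF w])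
  \<comment> \<open>test the bound on the family extended by \<open>w\<close>, with the optimal coefficient \<open>t\<close> at \<open>w\<close>\<close>
  define t where "t = - cnj F / of_real \<kappa>"
  have "k \<noteq> 0 \<Longrightarrow> (- G / k) * F + (- F / k) * G + (- F / k) * (- G / k) * k = - (F * G) / k" for k G :: complex
    by (simp add: field_simps)
  then have "t * F + cnj t * cnj F + cnj t * t * of_real \<kappa> = - (F * cnj F) / of_real \<kappa>"
    unfolding t_def using pos \<kappa>_def by simp
  also have "\<dots> = - of_real ((cmod F)\<^sup>2 / \<kappa>)"
    by (simp flip: complex_norm_square)
  finally have key: "t * F + cnj t * cnj F + cnj t * t * of_real \<kappa> = - of_real ((cmod F)\<^sup>2 / \<kappa>)" .
  have "kernel_form K (Suc n) (z(n := w)) (a(n := t))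
      = kernel_form K n z a + (t * F + cnj t * cnj F + cnj t * t * of_real \<kappa>)"
    unfolding kernel_form_extend F_def[symmetric] Fcnj diag by (simp only: add.assoc)
  then have "kernel_form K (Suc n) (z(n := w)) (a(n := t)) = kernel_form K n z a - of_real ((cmod F)\<^sup>2 / \<kappa>)"
    unfolding key by simp
  moreover have "0 \<le> Re (kernel_form K (Suc n) (z(n := w)) (a(n := t)))"
    using z w by (intro kernel_form_nonneg) auto
  ultimately have "(cmod F)\<^sup>2 / \<kappa> \<le> Re (kernel_form K n z a)" by simp
  then show "(cmod F)\<^sup>2 \<le> (sqrt \<kappa>)\<^sup>2 * Re (kernel_form K n z a)"
    using pos \<kappa>_def by (simp add: divide_le_eq mult.commute)
qed

lemma norm_kernel_le:
  assumes "y \<in> ball 0 1" "z \<in> ball 0 1" "Re (K z z) > 0"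
  shows "cmod (K z y) \<le> sqrt (Re (K z z)) * sqrt (Re (K y y))"
  using norm_le_rkhs_bound[OF rkhs_bound_kernel assms(1)] assms(2,3) .

lemma sqrt_kernel_diag_le:
  assumes "rkhs_bound K (K z) c" "z \<in> ball 0 1"
  shows "sqrt (Re (K z z)) \<le> c"
proof -
  define s where "s = sqrt (Re (K z z))"
  have "s * s = cmod (K z z)"
    unfolding s_def using kernel_diag_real[OF assms(2)] by (metis norm_of_real abs_of_nonneg real_sqrt_mult_self)
  also have "\<dots> \<le> c * s"
    unfolding s_def by (rule norm_le_rkhs_bound[OF assms])
  finally have "s * s \<le> c * s" .
  moreover have "s \<ge> 0" unfolding s_def using kernel_diag_real(2)[OF assms(2)] by simp
  ultimately show ?thesis
    using rkhs_bound_nonneg[OF assms(1)] unfolding s_def[symmetric]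
    by (cases "s = 0") (auto simp: mult_le_cancel_right)
qed


lemma dist_le_of_rkhs_bound_kernel_diff:
  assumes z: "z \<in> ball 0 1" and w: "w \<in> ball 0 1"
    and c: "rkhs_bound K (\<lambda>v. K z v - f v) c" and d: "rkhs_bound K (\<lambda>v. K w v - f v) d"
  shows "dist (f z) (f w) \<le> c * sqrt (Re (K w w)) + d * sqrt (Re (K z z)) + 2 * (d * sqrt (Re (K w w)))"
proof -
  define u where "u = (\<lambda>x y. K x y - f y)"
  have conj_diff: "f x - cnj (f y) = cnj (u x y) - u y x" for x y
    unfolding u_def using cnj_kernel[of x y] by simp
  have "dist (f z) (f w) = cmod ((cnj (u z w) - u w z) - (cnj (u w w) - u w w))"
    unfolding dist_norm conj_diff[symmetric] by simp
  also have "\<dots> \<le> (cmod (u z w) + cmod (u w z)) + (cmod (u w w) + cmod (u w w))"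
    using norm_triangle_ineq4[of "cnj (u z w) - u w z" "cnj (u w w) - u w w"]
      norm_triangle_ineq4[of "cnj (u z w)" "u w z"] norm_triangle_ineq4[of "cnj (u w w)" "u w w"]
    by simp
  also have "\<dots> \<le> c * sqrt (Re (K w w)) + d * sqrt (Re (K z z)) + 2 * (d * sqrt (Re (K w w)))"
    using norm_le_rkhs_bound[OF c w] norm_le_rkhs_bound[OF d z] norm_le_rkhs_bound[OF d w]
    unfolding u_def by simp
  finally show ?thesis .
qed

end

section \<open>Pick's theorem for the de Branges-Rovnyak kernel\<close>

lemma cnj_hb_kernel: "cnj (hb_kernel b x y) = hb_kernel b y x"
  unfolding hb_kernel_def by (simp add: mult.commute)

lemma one_minus_cnj_mult_neq_0: "cmod u < 1 \<Longrightarrow> cmod v < 1 \<Longrightarrow> 1 - cnj u * v \<noteq> 0"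
  using norm_mult_less[of "cnj u" 1 v 1] by auto

lemma one_minus_cnj_Moebius_mult_Moebius:
  assumes "1 - cnj w * s \<noteq> 0" "1 - cnj w * t \<noteq> 0"
  shows "1 - cnj (Moebius_function 0 w s) * Moebius_function 0 w t
       = (1 - cnj w * w) * (1 - cnj s * t) / (cnj (1 - cnj w * s) * (1 - cnj w * t))"
proof -
  have frac: "1 - A / B * (C / D) = (B * D - A * C) / (B * D)" if "B \<noteq> 0" "D \<noteq> 0" for A B C D :: complex
    using that by (simp add: field_simps)
  have "cnj (1 - cnj w * s) \<noteq> 0" using assms(1) by (metis complex_cnj_zero_iff)
  then have "1 - cnj (Moebius_function 0 w s) * Moebius_function 0 w t
      = (cnj (1 - cnj w * s) * (1 - cnj w * t) - (cnj s - cnj w) * (t - w)) / (cnj (1 - cnj w * s) * (1 - cnj w * t))"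
    using frac assms(2) unfolding Moebius_function_simple complex_cnj_divide complex_cnj_diff by presburger
  also have "cnj (1 - cnj w * s) * (1 - cnj w * t) - (cnj s - cnj w) * (t - w) = (1 - cnj w * w) * (1 - cnj s * t)"
    by (simp add: algebra_simps)
  finally show ?thesis .
qed

lemma norm_le_norm_Moebius_of_zero:
  assumes g: "g holomorphic_on ball 0 1" "g ` ball 0 1 \<subseteq> ball 0 1"
    and p: "p \<in> ball 0 1" "g p = 0" and x: "x \<in> ball 0 1"
  shows "cmod (g x) \<le> cmod (Moebius_function 0 p x)"
proof -
  have "cmod p < 1" "cmod (- p) < 1" using p by auto
  have "cmod ((g \<circ> Moebius_function 0 (- p)) u) \<le> cmod u" if "cmod u < 1" for u
  proof (rule Schwarz_Lemma(1)[OF _ _ _ that])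
    show "g \<circ> Moebius_function 0 (- p) holomorphic_on ball 0 1"
      using Moebius_function_norm_lt_1[OF \<open>cmod (- p) < 1\<close>] g(2)
      by (intro holomorphic_on_compose_gen[OF Moebius_function_holomorphic[OF \<open>cmod (- p) < 1\<close>] g(1)]) auto
    show "(g \<circ> Moebius_function 0 (- p)) 0 = 0"
      using p by (simp add: Moebius_function_of_zero)
    show "cmod ((g \<circ> Moebius_function 0 (- p)) z) < 1" if "cmod z < 1" for z
      using Moebius_function_norm_lt_1[OF \<open>cmod (- p) < 1\<close> that, of 0] g(2)
      by (metis comp_apply image_subset_iff mem_ball_0)
  qed
  from this[of "Moebius_function 0 p x"] show ?thesis
    using Moebius_function_norm_lt_1[OF \<open>cmod p < 1\<close>] Moebius_function_compose[of "- p" p x] x \<open>cmod p < 1\<close>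
    by auto
qed

lemma Moebius_factor_of_zero:
  assumes g: "g holomorphic_on ball 0 1" "g ` ball 0 1 \<subseteq> ball 0 1"
    and p: "p \<in> ball 0 1" "g p = 0"
  obtains h where "h holomorphic_on ball 0 1" "h ` ball 0 1 \<subseteq> cball 0 1"
    "\<And>x. x \<in> ball 0 1 \<Longrightarrow> g x = Moebius_function 0 p x * h x"
proof -
  have "cmod p < 1" using p by simp
  define q where "q = (\<lambda>x. if x = p then deriv g p else (g x - g p) / (x - p))"
  define h where "h = (\<lambda>x. q x * (1 - cnj p * x))"
  have h_holo: "h holomorphic_on ball 0 1"
    unfolding h_def q_def using p by (intro holomorphic_intros pole_lemma[OF g(1)]) auto
  have g_eq: "g x = Moebius_function 0 p x * h x" if "x \<in> ball 0 1" for x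
    using p one_minus_cnj_mult_neq_0[of p x] that
    by (cases "x = p") (auto simp: h_def q_def Moebius_function_simple)
  have h_le: "cmod (h x) \<le> 1" if "x \<in> ball 0 1" "x \<noteq> p" for x
  proof -
    have "Moebius_function 0 p x \<noteq> 0"
      using that one_minus_cnj_mult_neq_0[of p x] \<open>cmod p < 1\<close> by (simp add: Moebius_function_simple)
    then show ?thesis
      using norm_le_norm_Moebius_of_zero[OF g p that(1)] g_eq[OF that(1)] by (simp add: norm_mult)
  qed
  have "h p \<in> cball 0 1"
  proof (rule Lim_in_closed_set[of "cball 0 1" h])
    show "(h \<longlongrightarrow> h p) (at p)"
      using h_holo p by (metis at_within_open continuous_on_def holomorphic_on_imp_continuous_on open_ball)
    show "eventually (\<lambda>x. h x \<in> cball 0 1) (at p)"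
      using eventually_at_in_open'[OF open_ball p(1)] eventually_neq_at_within[of p p UNIV]
      by eventually_elim (use h_le in auto)
  qed auto
  then have "h ` ball 0 1 \<subseteq> cball 0 1"
    using h_le by fastforce
  with h_holo g_eq show ?thesis using that by blast
qed

lemma Schur_step:
  assumes b: "b holomorphic_on ball 0 1" "b ` ball 0 1 \<subseteq> ball 0 1" and p: "p \<in> ball 0 1"
  obtains b1 where "b1 holomorphic_on ball 0 1" "b1 ` ball 0 1 \<subseteq> cball 0 1"
    "\<And>x. x \<in> ball 0 1 \<Longrightarrow> b x = Moebius_function 0 (- b p) (Moebius_function 0 p x * b1 x)"
proof -
  have bp: "cmod (b p) < 1" using b(2) p by (metis image_subset_iff mem_ball_0)
  define g where "g = Moebius_function 0 (b p) \<circ> b"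
  have "g holomorphic_on ball 0 1"
    unfolding g_def using b by (intro holomorphic_on_compose_gen[OF b(1) Moebius_function_holomorphic[OF bp]]) auto
  moreover have "g ` ball 0 1 \<subseteq> ball 0 1"
    unfolding g_def using b(2) Moebius_function_norm_lt_1[OF bp] by auto
  moreover have "g p = 0"
    unfolding g_def by (simp add: Moebius_function_eq_zero)
  ultimately obtain b1 where b1: "b1 holomorphic_on ball 0 1" "b1 ` ball 0 1 \<subseteq> cball 0 1"
    and g_eq: "\<And>x. x \<in> ball 0 1 \<Longrightarrow> g x = Moebius_function 0 p x * b1 x"
    using Moebius_factor_of_zero p by blast
  have "b x = Moebius_function 0 (- b p) (Moebius_function 0 p x * b1 x)" if "x \<in> ball 0 1" for x
  proof -
    have "cmod (b x) < 1" using b(2) that by (metis image_subset_iff mem_ball_0)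
    then show ?thesis
      using Moebius_function_compose[of "- b p" "b p" "b x"] bp g_eq[OF that] by (simp add: g_def)
  qed
  with b1 that show ?thesis by blast
qed

lemma hb_kernel_Schur_step:
  fixes a p :: complex and b b1 :: "complex \<Rightarrow> complex"
  defines "g \<equiv> \<lambda>x. Moebius_function 0 p x * b1 x"
  defines "U \<equiv> \<lambda>x. 1 / ((1 + cnj a * g x) * (1 - cnj p * x))"
    and "V \<equiv> \<lambda>x. Moebius_function 0 p x / (1 + cnj a * g x)"
  assumes a: "cmod a < 1" and p: "cmod p < 1" and x: "x \<in> ball 0 1" and y: "y \<in> ball 0 1"
    and b1: "b1 ` ball 0 1 \<subseteq> cball 0 1"
    and b: "\<And>x. x \<in> ball 0 1 \<Longrightarrow> b x = Moebius_function 0 (- a) (g x)"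
  shows "hb_kernel b y x = (1 - cnj a * a) * ((1 - cnj p * p) * (cnj (U y) * U x) + cnj (V y) * V x * hb_kernel b1 y x)"
proof -
  have g_lt_1: "cmod (g u) < 1" if "u \<in> ball 0 1" for u
  proof -
    have "cmod (b1 u) \<le> 1" using b1 that by (metis image_subset_iff mem_cball_0)
    then have "cmod (g u) \<le> cmod (Moebius_function 0 p u)"
      unfolding g_def norm_mult by (simp add: mult_left_le)
    also have "\<dots> < 1" using Moebius_function_norm_lt_1[OF p] that by simp
    finally show ?thesis .
  qed
  have E: "1 - cnj (- a) * g u \<noteq> 0" and F: "1 - cnj p * u \<noteq> 0" if "u \<in> ball 0 1" for u
    using one_minus_cnj_mult_neq_0[of "- a" "g u"] one_minus_cnj_mult_neq_0[of p u] a p g_lt_1[OF that] that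
    by auto
  define Ex Ey Fx Fy Mx My D where "Ex = 1 + cnj a * g x" and "Ey = cnj (1 + cnj a * g y)"
    and "Fx = 1 - cnj p * x" and "Fy = cnj (1 - cnj p * y)"
    and "Mx = Moebius_function 0 p x" and "My = cnj (Moebius_function 0 p y)" and "D = 1 - cnj y * x"
  have nonzero: "D \<noteq> 0" "Ey \<noteq> 0" "Ex \<noteq> 0" "Fy \<noteq> 0" "Fx \<noteq> 0"
    using one_minus_cnj_mult_neq_0 x y E[OF x] E[OF y] F[OF x] F[OF y]
    unfolding D_def Ex_def Ey_def Fx_def Fy_def by (auto simp del: complex_cnj_add complex_cnj_diff)
  have frac: "al * (be * D / (Fy * Fx) + cq * qx * c) / (Ey * Ex) / D
      = al * (be * (1 / (Ey * Fy) * (1 / (Ex * Fx))) + cq / Ey * (qx / Ex) * (c / D))" for al be cq qx c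
    using nonzero by (simp add: field_simps)
  have UV: "1 / (Ey * Fy) = cnj (U y)" "1 / (Ex * Fx) = U x" "My / Ey = cnj (V y)" "Mx / Ex = V x"
    unfolding U_def V_def Ex_def Ey_def Fx_def Fy_def Mx_def My_def by simp_all
  have "hb_kernel b y x = (1 - cnj (b y) * b x) / D"
    unfolding hb_kernel_def D_def ..
  also have "1 - cnj (b y) * b x = (1 - cnj a * a) * (1 - cnj (g y) * g x) / (Ey * Ex)"
    using one_minus_cnj_Moebius_mult_Moebius[OF E[OF y] E[OF x]] b x y unfolding Ex_def Ey_def by simp
  also have "1 - cnj (g y) * g x = (1 - cnj p * p) * D / (Fy * Fx) + My * Mx * (1 - cnj (b1 y) * b1 x)"
  proof -
    have "1 - cnj (g y) * g x = (1 - My * Mx) + My * Mx * (1 - cnj (b1 y) * b1 x)"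
      unfolding g_def My_def Mx_def by (simp add: algebra_simps)
    also have "1 - My * Mx = (1 - cnj p * p) * D / (Fy * Fx)"
      unfolding My_def Mx_def D_def Fy_def Fx_def by (rule one_minus_cnj_Moebius_mult_Moebius[OF F[OF y] F[OF x]])
    finally show ?thesis .
  qed
  also have "(1 - cnj a * a) * ((1 - cnj p * p) * D / (Fy * Fx) + My * Mx * (1 - cnj (b1 y) * b1 x)) / (Ey * Ex) / D
      = (1 - cnj a * a) * ((1 - cnj p * p) * (1 / (Ey * Fy) * (1 / (Ex * Fx))) + My / Ey * (Mx / Ex) * hb_kernel b1 y x)"
    unfolding frac by (simp only: hb_kernel_def D_def)
  finally show ?thesis
    unfolding UV .
qed

lemma Schur_function_cases:
  assumes "b holomorphic_on ball 0 1" "b ` ball 0 1 \<subseteq> cball 0 1"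
  obtains (unimodular_constant) c where "cmod c = 1" "\<And>x. x \<in> ball 0 1 \<Longrightarrow> b x = c"
    | (into_disc) "b ` ball 0 1 \<subseteq> ball 0 1"
proof (cases "\<exists>x\<in>ball 0 1. cmod (b x) = 1")
  case True
  then obtain x0 where x0: "x0 \<in> ball 0 1" "cmod (b x0) = 1" by blast
  have "b constant_on ball 0 1"
    using assms x0 by (intro maximum_modulus_principle[of b "ball 0 1" "ball 0 1" x0]) (auto simp: image_subset_iff)
  then show ?thesis
    using that(1) x0 unfolding constant_on_def by metis
next
  case False
  then show ?thesis
    using that(2) assms(2) by fastforce
qed

lemma Re_kernel_form_hb_kernel_Schur_step:
  assumes b: "b ` ball 0 1 \<subseteq> ball 0 1" and z: "\<forall>i<Suc n. z i \<in> ball 0 1"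
    and b1: "b1 ` ball 0 1 \<subseteq> cball 0 1"
    and b_eq: "\<And>x. x \<in> ball 0 1 \<Longrightarrow> b x = Moebius_function 0 (- b (z n)) (Moebius_function 0 (z n) x * b1 x)"
  obtains T a' where "Re (kernel_form (hb_kernel b) (Suc n) z a)
      = (1 - (cmod (b (z n)))\<^sup>2) * ((1 - (cmod (z n))\<^sup>2) * (cmod T)\<^sup>2 + Re (kernel_form (hb_kernel b1) n z a'))"
proof -
  define p where "p = z n"
  have "cmod (b p) < 1" and "cmod p < 1"
    using b z by (auto simp: p_def image_subset_iff)
  define g where "g = (\<lambda>x. Moebius_function 0 p x * b1 x)"
  define U where "U = (\<lambda>x. 1 / ((1 + cnj (b p) * g x) * (1 - cnj p * x)))"
  define V where "V = (\<lambda>x. Moebius_function 0 p x / (1 + cnj (b p) * g x))"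
  define a' where "a' = (\<lambda>j. a j * cnj (V (z j)))"
  define T where "T = (\<Sum>j<Suc n. a j * cnj (U (z j)))"
  have dec: "hb_kernel b y x = (1 - cnj (b p) * b p) * ((1 - cnj p * p) * (cnj (U y) * U x) + cnj (V y) * V x * hb_kernel b1 y x)"
    if "x \<in> ball 0 1" "y \<in> ball 0 1" for x y
    unfolding U_def V_def g_def
    by (rule hb_kernel_Schur_step[OF \<open>cmod (b p) < 1\<close> \<open>cmod p < 1\<close> that b1 b_eq[folded p_def]])
  have "kernel_form (hb_kernel b) (Suc n) z a = kernel_form (\<lambda>y x.
      ((1 - cnj (b p) * b p) * (1 - cnj p * p)) * (cnj (U y) * U x) + (1 - cnj (b p) * b p) * (cnj (V y) * V x * hb_kernel b1 y x)) (Suc n) z a"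
    using z by (intro kernel_form_cong) (simp add: dec distrib_left mult.assoc)
  also have "\<dots> = (1 - cnj (b p) * b p) * ((1 - cnj p * p) * of_real ((cmod T)\<^sup>2) + kernel_form (hb_kernel b1) n z a')"
  proof -
    have "V p = 0" by (simp add: V_def Moebius_function_eq_zero)
    then have "a' n = 0" by (simp add: a'_def p_def)
    then show ?thesis
      unfolding kernel_form_linear kernel_form_rank_one kernel_form_weighted
      by (simp add: T_def a'_def[symmetric] kernel_form_Suc_zero algebra_simps)
  qed
  finally have "Re (kernel_form (hb_kernel b) (Suc n) z a)
      = (1 - (cmod (b p))\<^sup>2) * ((1 - (cmod p)\<^sup>2) * (cmod T)\<^sup>2 + Re (kernel_form (hb_kernel b1) n z a'))"
    by (simp add: complex_norm_square[symmetric] mult.commute[of "cnj _"])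
  then show ?thesis
    unfolding p_def by (rule that)
qed

(* Pick's theorem, by induction on the number of points: one step of the Schur algorithm
   at the last point removes that point from the form. *)

theorem kernel_form_hb_kernel_nonneg:
  assumes "b holomorphic_on ball 0 1" "b ` ball 0 1 \<subseteq> cball 0 1" "\<forall>i<n. z i \<in> ball 0 1"
  shows "0 \<le> Re (kernel_form (hb_kernel b) n z a)"
  using assms
proof (induction n arbitrary: b a)
  case 0
  then show ?case by (simp add: kernel_form_def)
next
  case (Suc n)
  note z = Suc.prems(3)
  from Suc.prems(1,2) show ?case
  proof (cases rule: Schur_function_cases)
    case (unimodular_constant c)
    have "cnj c * c = 1"
      using unimodular_constant(1) by (metis complex_norm_square mult.commute norm_one of_real_1 power_one)
    then have "kernel_form (hb_kernel b) (Suc n) z a = kernel_form (\<lambda>_ _. 0) (Suc n) z a"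
      using z unimodular_constant(2) by (intro kernel_form_cong) (simp add: hb_kernel_def)
    then show ?thesis by (simp add: kernel_form_def)
  next
    case into_disc
    obtain b1 where b1: "b1 holomorphic_on ball 0 1" "b1 ` ball 0 1 \<subseteq> cball 0 1"
      and b_eq: "\<And>x. x \<in> ball 0 1 \<Longrightarrow> b x = Moebius_function 0 (- b (z n)) (Moebius_function 0 (z n) x * b1 x)"
      using Schur_step[OF Suc.prems(1) into_disc] z by blast
    obtain T a' where "Re (kernel_form (hb_kernel b) (Suc n) z a)
        = (1 - (cmod (b (z n)))\<^sup>2) * ((1 - (cmod (z n))\<^sup>2) * (cmod T)\<^sup>2 + Re (kernel_form (hb_kernel b1) n z a'))"
      using Re_kernel_form_hb_kernel_Schur_step[OF into_disc z b1(2) b_eq] .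
    moreover have "0 \<le> Re (kernel_form (hb_kernel b1) n z a')"
      using Suc.IH b1 z by simp
    moreover have "cmod (b (z n)) < 1" "cmod (z n) < 1"
      using into_disc z by (auto simp: image_subset_iff)
    ultimately show ?thesis
      by (simp add: abs_square_le_1)
  qed
qed

section \<open>Kernel estimates for holomorphic self-maps of the disc\<close>

lemma cnj_mult_self: "cnj z * z = of_real ((cmod z)\<^sup>2)"
  by (metis complex_norm_square mult.commute)

lemma one_minus_norm_le_of_near:
  assumes "cmod (y - z) \<le> (1 - cmod z) / 2"
  shows "(1 - cmod z) / 2 \<le> 1 - cmod y"
  using norm_triangle_ineq2[of y z] assms by argo

lemma one_minus_norm_square_le_of_near:
  assumes z: "cmod z < 1" and near: "cmod (y - z) \<le> (1 - cmod z) / 2"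
  shows "(1 - (cmod z)\<^sup>2) / 4 \<le> 1 - (cmod y)\<^sup>2"
proof -
  have "cmod y < 1" using one_minus_norm_le_of_near[OF near] z by argo
  have "1 - (cmod z)\<^sup>2 = (1 - cmod z) * (1 + cmod z)" by (simp add: power2_eq_square algebra_simps)
  also have "\<dots> \<le> (1 - cmod z) * 2" using z by (intro mult_left_mono) auto
  also have "\<dots> \<le> 4 * (1 - cmod y)" using one_minus_norm_le_of_near[OF near] by simp
  also have "\<dots> \<le> 4 * (1 - (cmod y)\<^sup>2)"
    using \<open>cmod y < 1\<close> by (simp add: power2_eq_square mult_left_le_one_le)
  finally show ?thesis by simp
qed

lemma norm_one_minus_cnj_mult_le_of_near:
  assumes z: "cmod z < 1" and near: "cmod (y - z) \<le> (1 - cmod z) / 2"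
  shows "cmod (1 - cnj z * y) \<le> 3 / 2 * (1 - (cmod z)\<^sup>2)"
proof -
  have "1 - cnj z * y = of_real (1 - (cmod z)\<^sup>2) + cnj z * (z - y)"
    unfolding of_real_diff of_real_1 cnj_mult_self[symmetric] by (simp add: algebra_simps)
  then have "cmod (1 - cnj z * y) \<le> cmod (of_real (1 - (cmod z)\<^sup>2) :: complex) + cmod (cnj z * (z - y))"
    by (metis norm_triangle_ineq)
  also have "\<dots> = (1 - (cmod z)\<^sup>2) + cmod z * cmod (y - z)"
    unfolding norm_of_real norm_mult complex_mod_cnj using z by (simp add: norm_minus_commute abs_square_le_1)
  also have "\<dots> \<le> (1 - (cmod z)\<^sup>2) + 1 * ((1 - cmod z) / 2)"
    using near z by (intro add_left_mono mult_mono) auto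
  also have "\<dots> \<le> 3 / 2 * (1 - (cmod z)\<^sup>2)"
    using z mult_left_le_one_le[of "cmod z" "cmod z"] by (simp add: power2_eq_square field_simps)
  finally show ?thesis .
qed

lemma mean_defect_le_norm_one_minus_cnj_mult:
  "((1 - (cmod u)\<^sup>2) + (1 - (cmod v)\<^sup>2)) / 2 \<le> cmod (1 - cnj u * v)"
proof -
  have "2 * (cmod u * cmod v) \<le> (cmod u)\<^sup>2 + (cmod v)\<^sup>2"
    using sum_squares_bound[of "cmod u" "cmod v"] by (simp add: power2_eq_square)
  moreover have "1 - cmod u * cmod v \<le> cmod (1 - cnj u * v)"
    using norm_triangle_ineq2[of 1 "cnj u * v"] by (simp add: norm_mult)
  ultimately show ?thesis by argo
qed

lemma le_of_square_sum_le:
  fixes A B :: real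
  assumes "A \<ge> 0" "B > 0" "(A + B)\<^sup>2 \<le> 36 * (A * B)"
  shows "A \<le> 36 * B"
proof (cases "A \<le> B")
  case False
  then have "A * A \<le> (A + B)\<^sup>2"
    using assms by (simp add: power2_eq_square algebra_simps)
  then have "A * A \<le> (36 * B) * A"
    using assms by (simp add: algebra_simps)
  then show ?thesis using False assms by simp
qed (use assms in linarith)

lemma hb_kernel_diag:
  "hb_kernel b x x = of_real ((1 - (cmod (b x))\<^sup>2) / (1 - (cmod x)\<^sup>2))"
  unfolding hb_kernel_def cnj_mult_self by simp

lemma Re_hb_kernel_diag:
  "Re (hb_kernel b x x) = (1 - (cmod (b x))\<^sup>2) / (1 - (cmod x)\<^sup>2)"
  unfolding hb_kernel_diag Re_complex_of_real ..

locale disc_selfmap =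
  fixes b :: "complex \<Rightarrow> complex"
  assumes holomorphic: "b holomorphic_on ball 0 1"
    and maps_into: "b ` ball 0 1 \<subseteq> ball 0 1"

sublocale disc_selfmap \<subseteq> disc_psd_kernel "hb_kernel b"
proof
  show "cnj (hb_kernel b x y) = hb_kernel b y x" for x y by (rule cnj_hb_kernel)
  show "\<forall>i<n. z i \<in> ball 0 1 \<Longrightarrow> 0 \<le> Re (kernel_form (hb_kernel b) n z a)" for n z a
    using maps_into ball_subset_cball by (intro kernel_form_hb_kernel_nonneg[OF holomorphic]) auto
qed

context disc_selfmap
begin

lemma norm_lt_1: "x \<in> ball 0 1 \<Longrightarrow> cmod (b x) < 1"
  using maps_into by (metis image_subset_iff mem_ball_0)

lemma Re_hb_kernel_diag_pos: "x \<in> ball 0 1 \<Longrightarrow> Re (hb_kernel b x x) > 0"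
  using norm_lt_1[of x] by (simp add: Re_hb_kernel_diag abs_square_less_1)

lemma one_minus_norm_square_Harnack:
  assumes z: "z \<in> ball 0 1" and near: "cmod (y - z) \<le> (1 - cmod z) / 2"
  shows "1 - (cmod (b y))\<^sup>2 \<le> 36 * (1 - (cmod (b z))\<^sup>2)"
proof -
  have y: "y \<in> ball 0 1" using one_minus_norm_le_of_near[OF near] z by simp
  define A B Py Pz where "A = 1 - (cmod (b y))\<^sup>2" and "B = 1 - (cmod (b z))\<^sup>2"
    and "Py = 1 - (cmod y)\<^sup>2" and "Pz = 1 - (cmod z)\<^sup>2"
  have "A \<ge> 0" "B > 0" "Pz > 0"
    using norm_lt_1[OF y] norm_lt_1[OF z] z by (simp_all add: A_def B_def Pz_def abs_square_less_1 abs_square_le_1)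
  have "Pz / 4 \<le> Py" unfolding Py_def Pz_def using one_minus_norm_square_le_of_near near z by simp
  then have "Py > 0" using \<open>Pz > 0\<close> by simp
  have Kyy: "Re (hb_kernel b y y) = A / Py" and Kzz: "Re (hb_kernel b z z) = B / Pz"
    unfolding A_def B_def Py_def Pz_def by (rule Re_hb_kernel_diag)+
  have "1 - cnj (b z) * b y = hb_kernel b z y * (1 - cnj z * y)"
    unfolding hb_kernel_def using one_minus_cnj_mult_neq_0[of z y] y z by simp
  then have "cmod (1 - cnj (b z) * b y) = cmod (hb_kernel b z y) * cmod (1 - cnj z * y)"
    by (simp only: norm_mult)
  also have "\<dots> \<le> (sqrt (B / Pz) * sqrt (A / Py)) * (3 / 2 * Pz)"
    using norm_kernel_le[OF y z Re_hb_kernel_diag_pos[OF z]] norm_one_minus_cnj_mult_le_of_near[of z y] z near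
      \<open>A \<ge> 0\<close> \<open>B > 0\<close> \<open>Py > 0\<close> \<open>Pz > 0\<close>
    unfolding Kyy Kzz Pz_def by (intro mult_mono) auto
  finally have "(cmod (1 - cnj (b z) * b y))\<^sup>2 \<le> ((sqrt (B / Pz) * sqrt (A / Py)) * (3 / 2 * Pz))\<^sup>2"
    by (rule power_mono) simp
  also have "\<dots> = (B / Pz) * (A / Py) * (3 / 2 * Pz)\<^sup>2"
    using \<open>A \<ge> 0\<close> \<open>B > 0\<close> \<open>Pz > 0\<close> \<open>Py > 0\<close>
    unfolding power_mult_distrib by (simp only: real_sqrt_pow2 divide_nonneg_pos less_imp_le)
  also have "\<dots> = 9 / 4 * (A * B) * (Pz / Py)"
    using \<open>Pz > 0\<close> by (simp add: power2_eq_square field_simps)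
  also have "\<dots> \<le> 9 / 4 * (A * B) * 4"
    using \<open>Pz / 4 \<le> Py\<close> \<open>Py > 0\<close> \<open>A \<ge> 0\<close> \<open>B > 0\<close> by (intro mult_left_mono) (auto simp: divide_le_eq)
  finally have upper: "(cmod (1 - cnj (b z) * b y))\<^sup>2 \<le> 9 * (A * B)" by simp
  have "(A + B) / 2 \<le> cmod (1 - cnj (b z) * b y)"
    using mean_defect_le_norm_one_minus_cnj_mult[of "b z" "b y"] unfolding A_def B_def by argo
  then have "((A + B) / 2)\<^sup>2 \<le> 9 * (A * B)"
    using upper \<open>A \<ge> 0\<close> \<open>B > 0\<close> by (meson add_nonneg_nonneg divide_nonneg_nonneg less_imp_le order_trans power_mono zero_le_numeral)
  then have "A \<le> 36 * B"
    using le_of_square_sum_le[OF \<open>A \<ge> 0\<close> \<open>B > 0\<close>] by (simp add: power_divide)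
  then show ?thesis
    unfolding A_def B_def .
qed

lemma Re_hb_kernel_diag_Harnack:
  assumes z: "z \<in> ball 0 1" and near: "cmod (y - z) \<le> (1 - cmod z) / 2"
  shows "Re (hb_kernel b y y) \<le> 144 * Re (hb_kernel b z z)"
proof -
  have "1 - (cmod z)\<^sup>2 > 0" using z by (simp add: abs_square_less_1)
  have "(1 - (cmod (b y))\<^sup>2) / (1 - (cmod y)\<^sup>2) \<le> (36 * (1 - (cmod (b z))\<^sup>2)) / ((1 - (cmod z)\<^sup>2) / 4)"
    using one_minus_norm_square_Harnack[OF z near] one_minus_norm_square_le_of_near[OF _ near] z
      norm_lt_1[OF z] \<open>1 - (cmod z)\<^sup>2 > 0\<close>
    by (intro frac_le) (auto simp: abs_square_le_1)
  then show ?thesis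
    unfolding Re_hb_kernel_diag by simp
qed

lemma deriv_kernel_defect:
  assumes f: "f holomorphic_on ball 0 1" and z: "z \<in> ball 0 1"
  shows "deriv (\<lambda>y. (1 - cnj (b z) * b y) - (1 - cnj z * y) * f y) z
       = cnj z * f z - cnj (b z) * deriv b z - (1 - cnj z * z) * deriv f z"
proof -
  have "(b has_field_derivative deriv b z) (at z)" "(f has_field_derivative deriv f z) (at z)"
    using holomorphic f z by (auto intro: holomorphic_derivI)
  then have "((\<lambda>y. (1 - cnj (b z) * b y) - (1 - cnj z * y) * f y) has_field_derivative
      cnj z * f z - cnj (b z) * deriv b z - (1 - cnj z * z) * deriv f z) (at z)"
    by (auto intro!: derivative_eq_intros simp: algebra_simps)
  then show ?thesis by (rule DERIV_imp_deriv)
qed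

lemma norm_kernel_defect_le_of_near:
  assumes z: "z \<in> ball 0 1" and near: "cmod (y - z) \<le> (1 - cmod z) / 2"
    and bound: "rkhs_bound (hb_kernel b) (\<lambda>w. hb_kernel b z w - f w) c"
  shows "cmod ((1 - cnj (b z) * b y) - (1 - cnj z * y) * f y)
       \<le> 18 * c * (1 - (cmod z)\<^sup>2) * sqrt (Re (hb_kernel b z z))"
proof -
  have "cmod z < 1" using z by simp
  have y: "y \<in> ball 0 1" using one_minus_norm_le_of_near[OF near] z by simp
  have "1 - cnj z * y \<noteq> 0" using one_minus_cnj_mult_neq_0 y z by simp
  then have "(1 - cnj (b z) * b y) - (1 - cnj z * y) * f y = (1 - cnj z * y) * (hb_kernel b z y - f y)"
    unfolding hb_kernel_def by (simp add: field_simps)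
  then have "cmod ((1 - cnj (b z) * b y) - (1 - cnj z * y) * f y) = cmod (1 - cnj z * y) * cmod (hb_kernel b z y - f y)"
    by (simp only: norm_mult)
  also have "\<dots> \<le> (3 / 2 * (1 - (cmod z)\<^sup>2)) * (c * sqrt (Re (hb_kernel b y y)))"
    using norm_one_minus_cnj_mult_le_of_near[OF \<open>cmod z < 1\<close> near] norm_le_rkhs_bound[OF bound y]
      \<open>cmod z < 1\<close> by (intro mult_mono) (auto simp: abs_square_le_1)
  also have "\<dots> \<le> (3 / 2 * (1 - (cmod z)\<^sup>2)) * (c * (12 * sqrt (Re (hb_kernel b z z))))"
  proof -
    have "sqrt (Re (hb_kernel b y y)) \<le> sqrt (144 * Re (hb_kernel b z z))"
      using Re_hb_kernel_diag_Harnack[OF z near] by (rule real_sqrt_le_mono)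
    then show ?thesis
      using rkhs_bound_nonneg[OF bound] \<open>cmod z < 1\<close>
      by (intro mult_left_mono) (auto simp: real_sqrt_mult abs_square_le_1)
  qed
  finally show ?thesis by (simp add: algebra_simps)
qed

lemma norm_deriv_kernel_defect_le:
  assumes f: "f holomorphic_on ball 0 1" and z: "z \<in> ball 0 1"
    and bound: "rkhs_bound (hb_kernel b) (\<lambda>w. hb_kernel b z w - f w) c"
  shows "cmod (deriv (\<lambda>y. (1 - cnj (b z) * b y) - (1 - cnj z * y) * f y) z)
       \<le> 72 * c * sqrt (Re (hb_kernel b z z))"
proof -
  define v where "v = (\<lambda>y. (1 - cnj (b z) * b y) - (1 - cnj z * y) * f y)"
  define r where "r = (1 - cmod z) / 2"
  define s where "s = sqrt (Re (hb_kernel b z z))"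
  have "cmod z < 1" "r > 0" "c \<ge> 0" "s \<ge> 0"
    using z rkhs_bound_nonneg[OF bound] Re_hb_kernel_diag_pos[OF z] by (auto simp: r_def s_def)
  have near: "cmod (y - z) \<le> (1 - cmod z) / 2" if "y \<in> cball z r" for y
    using that by (simp add: r_def dist_norm norm_minus_commute)
  have "cball z r \<subseteq> ball 0 1"
    using one_minus_norm_le_of_near[OF near] \<open>cmod z < 1\<close> by fastforce
  have "v holomorphic_on ball 0 1"
    unfolding v_def by (intro holomorphic_intros holomorphic f)
  have "cmod ((deriv ^^ 1) v z) \<le> fact 1 * (18 * c * (1 - (cmod z)\<^sup>2) * s) / r ^ 1"
  proof (rule Cauchy_inequality[OF _ _ \<open>r > 0\<close>])
    show "v holomorphic_on ball z r"
      using \<open>v holomorphic_on ball 0 1\<close> \<open>cball z r \<subseteq> ball 0 1\<close> ball_subset_cball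
      by (meson holomorphic_on_subset order_trans)
    show "continuous_on (cball z r) v"
      using \<open>v holomorphic_on ball 0 1\<close> \<open>cball z r \<subseteq> ball 0 1\<close>
      by (meson holomorphic_on_imp_continuous_on holomorphic_on_subset)
    show "cmod (v y) \<le> 18 * c * (1 - (cmod z)\<^sup>2) * s" if "cmod (z - y) = r" for y
      unfolding v_def s_def using that near[of y]
      by (intro norm_kernel_defect_le_of_near[OF z _ bound]) (simp add: dist_norm)
  qed
  also have "\<dots> = 36 * c * (1 + cmod z) * s"
    using \<open>cmod z < 1\<close> by (simp add: r_def power2_eq_square field_simps)
  also have "\<dots> \<le> 72 * c * s"
    using \<open>cmod z < 1\<close> \<open>c \<ge> 0\<close> \<open>s \<ge> 0\<close> mult_left_mono[of "1 + cmod z" 2 c]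
    by (intro mult_right_mono) auto
  finally show ?thesis by (simp add: v_def s_def)
qed

end

section \<open>Kernels converging at the boundary point 1\<close>

lemma norm_one_minus_cnj_mult_div_minus_1:
  assumes "z \<noteq> 1"
  shows "cmod ((1 - cnj z * z) / (1 - z) - 1) = cmod z"
proof -
  have "1 - z \<noteq> 0" using assms by simp
  then have "(1 - cnj z * z) / (1 - z) - 1 = z * (1 - cnj z) / (1 - z)"
    by (simp add: field_simps)
  moreover have "cmod (1 - cnj z) = cmod (1 - z)"
    by (metis complex_cnj_diff complex_cnj_one complex_mod_cnj)
  ultimately show ?thesis
    using \<open>1 - z \<noteq> 0\<close> by (simp add: norm_mult norm_divide)
qed

(* With g = (1 - conj b1 b) / (1 - y) the derivative of the kernel defect (deriv_kernel_defect)
   is the right-hand side; it exhibits b' - b1 g times a coefficient bounded away from 0. *)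
lemma boundary_derivative_identity:
  fixes b1 z d G bz :: complex
  assumes "b1 * cnj b1 = 1"
  shows "(d - b1 * G) * ((1 - cnj z * z) / (1 - z) * cnj b1 - cnj bz)
       = (cnj z * G - cnj bz * d - (1 - cnj z * z) * ((G - cnj b1 * d) / (1 - z))) - G * (cnj z - b1 * cnj bz)"
proof -
  define Q where "Q = (1 - cnj z * z) / (1 - z)"
  have "(1 - cnj z * z) * ((G - cnj b1 * d) / (1 - z)) = Q * (G - cnj b1 * d)"
    unfolding Q_def by simp
  moreover have "(d - b1 * G) * (Q * cnj b1 - cnj bz)
      = (cnj z * G - cnj bz * d - Q * (G - cnj b1 * d)) - G * (cnj z - b1 * cnj bz) + Q * G * (1 - b1 * cnj b1)"
    by (simp add: algebra_simps)
  ultimately show ?thesis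
    using assms unfolding Q_def[symmetric] by simp
qed

locale boundary_kernel_limit = disc_selfmap +
  fixes g :: "complex \<Rightarrow> complex" and F :: "complex filter"
  assumes nontrivial: "F \<noteq> bot"
    and eventually_in_disc: "eventually (\<lambda>z. z \<in> ball 0 1) F"
    and tendsto_one: "((\<lambda>z. z) \<longlongrightarrow> 1) F"
    and g_in_rkhs: "in_rkhs (hb_kernel b) g"
    and rkhs_norm_tendsto_0: "((\<lambda>z. rkhs_norm (hb_kernel b) (\<lambda>w. hb_kernel b z w - g w)) \<longlongrightarrow> 0) F"
begin

lemma eventually_rkhs_bound_less:
  assumes "e > 0"
  shows "eventually (\<lambda>z. z \<in> ball 0 1 \<and> (\<exists>c<e. rkhs_bound (hb_kernel b) (\<lambda>w. hb_kernel b z w - g w) c)) F"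
  using order_tendstoD(2)[OF rkhs_norm_tendsto_0 assms] eventually_in_disc
proof eventually_elim
  case (elim z)
  obtain cg where "rkhs_bound (hb_kernel b) g cg"
    using g_in_rkhs unfolding in_rkhs_def by blast
  then have "in_rkhs (hb_kernel b) (\<lambda>w. hb_kernel b z w - g w)"
    using rkhs_bound_diff[OF rkhs_bound_kernel[OF elim(2) Re_hb_kernel_diag_pos[OF elim(2)]]]
    unfolding in_rkhs_def by blast
  then show ?case
    using elim rkhs_bound_less_of_rkhs_norm_less by metis
qed

lemma hb_kernel_tendsto:
  assumes x: "x \<in> ball 0 1"
  shows "((\<lambda>z. hb_kernel b z x) \<longlongrightarrow> g x) F"
proof (rule tendstoI)
  fix e :: real assume "e > 0"
  define s where "s = sqrt (Re (hb_kernel b x x))"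
  have "s > 0" using Re_hb_kernel_diag_pos[OF x] s_def by simp
  have "eventually (\<lambda>z. z \<in> ball 0 1 \<and> (\<exists>c<e / s. rkhs_bound (hb_kernel b) (\<lambda>w. hb_kernel b z w - g w) c)) F"
    using \<open>e > 0\<close> \<open>s > 0\<close> by (intro eventually_rkhs_bound_less) simp
  then show "eventually (\<lambda>z. dist (hb_kernel b z x) (g x) < e) F"
  proof eventually_elim
    case (elim z)
    then obtain c where c: "c < e / s" "rkhs_bound (hb_kernel b) (\<lambda>w. hb_kernel b z w - g w) c" by blast
    have "dist (hb_kernel b z x) (g x) \<le> c * s"
      using norm_le_rkhs_bound[OF c(2) x] by (simp add: dist_norm s_def)
    also have "\<dots> < e"
      using c(1) \<open>s > 0\<close> by (simp add: field_simps)
    finally show ?case .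
  qed
qed

lemma eventually_sqrt_hb_kernel_diag_le:
  obtains M where "eventually (\<lambda>z. z \<in> ball 0 1 \<and> sqrt (Re (hb_kernel b z z)) \<le> M) F"
proof -
  obtain cg where cg: "rkhs_bound (hb_kernel b) g cg"
    using g_in_rkhs unfolding in_rkhs_def by blast
  have "eventually (\<lambda>z. z \<in> ball 0 1 \<and> sqrt (Re (hb_kernel b z z)) \<le> 1 + cg) F"
    using eventually_rkhs_bound_less[OF zero_less_one]
  proof eventually_elim
    case (elim z)
    then obtain c where c: "c < 1" "rkhs_bound (hb_kernel b) (\<lambda>w. hb_kernel b z w - g w) c" by auto
    have "rkhs_bound (hb_kernel b) (hb_kernel b z) (c + cg)"
      using rkhs_bound_add[OF c(2) cg] by simp
    then show ?case
      using sqrt_kernel_diag_le[of z "c + cg"] elim c(1) by fastforce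
  qed
  then show ?thesis using that by blast
qed

lemma norm_square_tendsto_1: "((\<lambda>z. (cmod (b z))\<^sup>2) \<longlongrightarrow> 1) F"
proof -
  obtain M where M: "eventually (\<lambda>z. z \<in> ball 0 1 \<and> sqrt (Re (hb_kernel b z z)) \<le> M) F"
    using eventually_sqrt_hb_kernel_diag_le by blast
  have "((\<lambda>z. 1 - (cmod (b z))\<^sup>2) \<longlongrightarrow> 0) F"
  proof (rule Lim_null_comparison)
    show "eventually (\<lambda>z. norm (1 - (cmod (b z))\<^sup>2) \<le> M\<^sup>2 * (1 - (cmod z)\<^sup>2)) F"
      using M
    proof eventually_elim
      case (elim z)
      then have "cmod z < 1" "cmod (b z) < 1" using norm_lt_1 by auto
      have "1 - (cmod z)\<^sup>2 > 0"
        using \<open>cmod z < 1\<close> by (simp add: abs_square_less_1)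
      then have "1 - (cmod (b z))\<^sup>2 = Re (hb_kernel b z z) * (1 - (cmod z)\<^sup>2)"
        by (simp add: Re_hb_kernel_diag)
      also have "\<dots> \<le> M\<^sup>2 * (1 - (cmod z)\<^sup>2)"
        using elim Re_hb_kernel_diag_pos[of z] \<open>cmod z < 1\<close>
        by (intro mult_right_mono) (auto simp: abs_square_le_1 real_le_rsqrt sqrt_le_D)
      finally show ?case
        using \<open>cmod (b z) < 1\<close> by (simp add: abs_square_le_1)
    qed
    have "((\<lambda>z. M\<^sup>2 * (1 - (cmod z)\<^sup>2)) \<longlongrightarrow> M\<^sup>2 * (1 - (cmod (1::complex))\<^sup>2)) F"
      by (intro tendsto_intros tendsto_one)
    then show "((\<lambda>z. M\<^sup>2 * (1 - (cmod z)\<^sup>2)) \<longlongrightarrow> 0) F" by simp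
  qed
  then have "((\<lambda>z. 1 - (1 - (cmod (b z))\<^sup>2)) \<longlongrightarrow> 1 - 0) F"
    by (intro tendsto_intros)
  then show ?thesis by simp
qed

lemma tendsto_boundary_value:
  obtains b1 where "(b \<longlongrightarrow> b1) F" "cmod b1 = 1"
proof -
  have "\<exists>x0\<in>ball 0 1. b x0 \<noteq> 0"
  proof (rule ccontr)
    assume b0: "\<not> (\<exists>x0\<in>ball 0 1. b x0 \<noteq> 0)"
    have "eventually (\<lambda>z. (cmod (b z))\<^sup>2 = 0) F"
    proof (rule eventually_mono[OF eventually_in_disc])
      show "(cmod (b z))\<^sup>2 = 0" if "z \<in> ball 0 1" for z
        using b0 that by simp
    qed
    then have "((\<lambda>z. (cmod (b z))\<^sup>2) \<longlongrightarrow> 0) F" by (rule tendsto_eventually)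
    from tendsto_unique[OF nontrivial this norm_square_tendsto_1] show False
      by simp
  qed
  then obtain x0 where x0: "x0 \<in> ball 0 1" "b x0 \<noteq> 0" by blast
  have "((\<lambda>z. (1 - (1 - cnj z * x0) * hb_kernel b z x0) / b x0) \<longlongrightarrow> (1 - (1 - cnj 1 * x0) * g x0) / b x0) F"
    using x0(2) by (intro tendsto_intros hb_kernel_tendsto[OF x0(1)] tendsto_one)
  moreover have "eventually (\<lambda>z. (1 - (1 - cnj z * x0) * hb_kernel b z x0) / b x0 = cnj (b z)) F"
    using eventually_in_disc
  proof eventually_elim
    case (elim z)
    then have "1 - cnj z * x0 \<noteq> 0" using one_minus_cnj_mult_neq_0 x0(1) by simp
    then have "(1 - cnj z * x0) * hb_kernel b z x0 = 1 - cnj (b z) * b x0"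
      unfolding hb_kernel_def by simp
    then show ?case using x0(2) by simp
  qed
  ultimately have "((\<lambda>z. cnj (b z)) \<longlongrightarrow> (1 - (1 - x0) * g x0) / b x0) F"
    by (simp add: Lim_transform_eventually)
  then have "((\<lambda>z. cnj (cnj (b z))) \<longlongrightarrow> cnj ((1 - (1 - x0) * g x0) / b x0)) F"
    by (rule tendsto_cnj)
  then have lim: "(b \<longlongrightarrow> cnj ((1 - (1 - x0) * g x0) / b x0)) F" by simp
  moreover have "(cmod (cnj ((1 - (1 - x0) * g x0) / b x0)))\<^sup>2 = 1"
    using tendsto_unique[OF nontrivial tendsto_power[OF tendsto_norm[OF lim]] norm_square_tendsto_1] .
  then have "cmod (cnj ((1 - (1 - x0) * g x0) / b x0)) = 1"
    using norm_ge_zero power2_eq_1_iff by (smt (verit))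
  ultimately show ?thesis
    using that by blast
qed

lemma g_eq_boundary_quotient:
  assumes b1: "(b \<longlongrightarrow> b1) F" and x: "x \<in> ball 0 1"
  shows "g x = (1 - cnj b1 * b x) / (1 - x)"
proof -
  have "1 - x \<noteq> 0" using x by auto
  then have "((\<lambda>z. (1 - cnj (b z) * b x) / (1 - cnj z * x)) \<longlongrightarrow> (1 - cnj b1 * b x) / (1 - cnj 1 * x)) F"
    by (intro tendsto_intros b1 tendsto_one) simp
  then have "((\<lambda>z. hb_kernel b z x) \<longlongrightarrow> (1 - cnj b1 * b x) / (1 - x)) F"
    by (simp add: hb_kernel_def)
  from tendsto_unique[OF nontrivial hb_kernel_tendsto[OF x] this] show ?thesis .
qed

lemma has_field_derivative_g:
  assumes b1: "(b \<longlongrightarrow> b1) F" and z: "z \<in> ball 0 1"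
  shows "(g has_field_derivative (g z - cnj b1 * deriv b z) / (1 - z)) (at z)"
proof -
  have "1 - z \<noteq> 0" using z by auto
  have "(b has_field_derivative deriv b z) (at z)"
    using holomorphic z by (auto intro: holomorphic_derivI)
  then have "((\<lambda>y. (1 - cnj b1 * b y) / (1 - y)) has_field_derivative
      ((1 - cnj b1 * b z) / (1 - z) - cnj b1 * deriv b z) / (1 - z)) (at z)"
    using \<open>1 - z \<noteq> 0\<close> by (auto intro!: derivative_eq_intros simp: field_simps power2_eq_square)
  then have "((\<lambda>y. (1 - cnj b1 * b y) / (1 - y)) has_field_derivative (g z - cnj b1 * deriv b z) / (1 - z)) (at z)"
    unfolding g_eq_boundary_quotient[OF b1 z] .
  then show ?thesis
  proof (rule has_field_derivative_transform_within_open[OF _ open_ball z])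
    show "(1 - cnj b1 * b x) / (1 - x) = g x" if "x \<in> ball 0 1" for x
      using g_eq_boundary_quotient[OF b1 that] by simp
  qed
qed

lemma g_holomorphic:
  assumes "(b \<longlongrightarrow> b1) F"
  shows "g holomorphic_on ball 0 1"
  using has_field_derivative_g[OF assms] holomorphic_on_open[OF open_ball] by blast

lemma g_convergent: obtains G where "(g \<longlongrightarrow> G) F"
proof -
  obtain M where M: "eventually (\<lambda>z. z \<in> ball 0 1 \<and> sqrt (Re (hb_kernel b z z)) \<le> M) F"
    using eventually_sqrt_hb_kernel_diag_le by blast
  have "cauchy_filter (filtermap g F)"
    unfolding cauchy_filter_metric_filtermap
  proof (intro allI impI)
    fix e :: real assume "e > 0"
    define \<epsilon> where "\<epsilon> = e / (4 * (\<bar>M\<bar> + 1))"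
    have "\<epsilon> > 0" using \<open>e > 0\<close> by (simp add: \<epsilon>_def)
    define P where "P = (\<lambda>z. z \<in> ball 0 1 \<and> sqrt (Re (hb_kernel b z z)) \<le> M \<and>
        (\<exists>c<\<epsilon>. rkhs_bound (hb_kernel b) (\<lambda>w. hb_kernel b z w - g w) c))"
    have "eventually P F"
      using eventually_rkhs_bound_less[OF \<open>\<epsilon> > 0\<close>] M unfolding P_def by eventually_elim auto
    moreover have "dist (g z) (g w) < e" if "P z" "P w" for z w
    proof -
      obtain c d where c: "c < \<epsilon>" "rkhs_bound (hb_kernel b) (\<lambda>v. hb_kernel b z v - g v) c"
        and d: "d < \<epsilon>" "rkhs_bound (hb_kernel b) (\<lambda>v. hb_kernel b w v - g v) d"
        using \<open>P z\<close> \<open>P w\<close> unfolding P_def by blast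
      have small: "x * t < \<epsilon> * (\<bar>M\<bar> + 1)" if "0 \<le> x" "x < \<epsilon>" "t \<le> M" for x t
      proof -
        have "x * t \<le> x * (\<bar>M\<bar> + 1)" using that by (intro mult_left_mono) auto
        also have "\<dots> < \<epsilon> * (\<bar>M\<bar> + 1)" using that by (intro mult_strict_right_mono) auto
        finally show ?thesis .
      qed
      have "c * sqrt (Re (hb_kernel b w w)) < \<epsilon> * (\<bar>M\<bar> + 1)"
        "d * sqrt (Re (hb_kernel b z z)) < \<epsilon> * (\<bar>M\<bar> + 1)"
        "d * sqrt (Re (hb_kernel b w w)) < \<epsilon> * (\<bar>M\<bar> + 1)"
        using \<open>P z\<close> \<open>P w\<close> c d rkhs_bound_nonneg[OF c(2)] rkhs_bound_nonneg[OF d(2)] unfolding P_def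
        by (blast intro: small)+
      moreover have "dist (g z) (g w) \<le> c * sqrt (Re (hb_kernel b w w)) + d * sqrt (Re (hb_kernel b z z))
          + 2 * (d * sqrt (Re (hb_kernel b w w)))"
        using \<open>P z\<close> \<open>P w\<close> c(2) d(2) unfolding P_def by (intro dist_le_of_rkhs_bound_kernel_diff) auto
      moreover have "4 * (\<epsilon> * (\<bar>M\<bar> + 1)) = e"
        unfolding \<epsilon>_def by (simp add: field_simps)
      ultimately show ?thesis by linarith
    qed
    ultimately show "\<exists>P. eventually P F \<and> (\<forall>z w. P z \<and> P w \<longrightarrow> dist (g z) (g w) < e)"
      by blast
  qed
  moreover have "filtermap g F \<noteq> bot"
    using nontrivial by (simp add: filtermap_bot_iff)
  ultimately obtain G where "filtermap g F \<le> nhds G"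
    using cauchy_filter_complete_converges[OF _ complete_UNIV] by auto
  then show ?thesis
    using that by (simp add: filterlim_def)
qed

lemma deriv_kernel_defect_tendsto_0:
  assumes b1: "(b \<longlongrightarrow> b1) F"
  shows "((\<lambda>z. deriv (\<lambda>y. (1 - cnj (b z) * b y) - (1 - cnj z * y) * g y) z) \<longlongrightarrow> 0) F"
proof (rule tendstoI)
  fix e :: real assume "e > 0"
  obtain M where M: "eventually (\<lambda>z. z \<in> ball 0 1 \<and> sqrt (Re (hb_kernel b z z)) \<le> M) F"
    using eventually_sqrt_hb_kernel_diag_le by blast
  define \<epsilon> where "\<epsilon> = e / (72 * (\<bar>M\<bar> + 1))"
  have "\<epsilon> > 0" using \<open>e > 0\<close> by (simp add: \<epsilon>_def)
  show "eventually (\<lambda>z. dist (deriv (\<lambda>y. (1 - cnj (b z) * b y) - (1 - cnj z * y) * g y) z) 0 < e) F"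
    using eventually_rkhs_bound_less[OF \<open>\<epsilon> > 0\<close>] M
  proof eventually_elim
    case (elim z)
    then obtain c where c: "c < \<epsilon>" "rkhs_bound (hb_kernel b) (\<lambda>w. hb_kernel b z w - g w) c" by blast
    have "cmod (deriv (\<lambda>y. (1 - cnj (b z) * b y) - (1 - cnj z * y) * g y) z)
        \<le> 72 * c * sqrt (Re (hb_kernel b z z))"
      using norm_deriv_kernel_defect_le[OF g_holomorphic[OF b1] _ c(2)] elim by blast
    also have "\<dots> \<le> 72 * c * (\<bar>M\<bar> + 1)"
      using elim rkhs_bound_nonneg[OF c(2)] by (intro mult_left_mono) auto
    also have "\<dots> < 72 * \<epsilon> * (\<bar>M\<bar> + 1)"
      using c(1) by (intro mult_strict_right_mono) auto
    also have "\<dots> = e"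
      unfolding \<epsilon>_def by (simp add: field_simps)
    finally show ?case by simp
  qed
qed

lemma eventually_norm_boundary_denominator_ge:
  assumes b1: "(b \<longlongrightarrow> b1) F" "cmod b1 = 1"
  shows "eventually (\<lambda>z. 1 / 2 \<le> cmod ((1 - cnj z * z) / (1 - z) * cnj b1 - cnj (b z))) F"
proof -
  have "eventually (\<lambda>z. dist z 1 < 1 / 4) F" "eventually (\<lambda>z. dist (b z) b1 < 1 / 4) F"
    by (rule tendstoD[OF tendsto_one], simp) (rule tendstoD[OF b1(1)], simp)
  then show ?thesis
    using eventually_in_disc
  proof eventually_elim
    case (elim z)
    have "z \<noteq> 1" using elim(3) by auto
    have "3 / 4 \<le> cmod z"
      using norm_triangle_ineq2[of 1 z] elim(1) by (simp add: dist_norm norm_minus_commute)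
    have "(1 - cnj z * z) / (1 - z) * cnj b1 - cnj (b z) = cnj b1 * ((1 - cnj z * z) / (1 - z) - 1) + cnj (b1 - b z)"
      by (simp add: algebra_simps)
    then have "cmod (cnj b1 * ((1 - cnj z * z) / (1 - z) - 1)) - cmod (cnj (b1 - b z))
        \<le> cmod ((1 - cnj z * z) / (1 - z) * cnj b1 - cnj (b z))"
      by (metis norm_diff_ineq)
    moreover have "cmod (cnj b1 * ((1 - cnj z * z) / (1 - z) - 1)) = cmod z"
      using b1(2) norm_one_minus_cnj_mult_div_minus_1[OF \<open>z \<noteq> 1\<close>] by (simp add: norm_mult)
    moreover have "cmod (cnj (b1 - b z)) < 1 / 4"
      unfolding complex_mod_cnj using elim(2) by (simp add: dist_norm norm_minus_commute)
    ultimately show ?case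
      using \<open>3 / 4 \<le> cmod z\<close> by linarith
  qed
qed

lemma deriv_tendsto:
  assumes b1: "(b \<longlongrightarrow> b1) F" "cmod b1 = 1" and G: "(g \<longlongrightarrow> G) F"
  shows "(deriv b \<longlongrightarrow> b1 * G) F"
proof -
  \<comment> \<open>\<open>den z\<close> has no limit at 1, but its modulus stays at least 1/2\<close>
  define den where "den = (\<lambda>z. (1 - cnj z * z) / (1 - z) * cnj b1 - cnj (b z))"
  define defect where "defect = (\<lambda>z. deriv (\<lambda>y. (1 - cnj (b z) * b y) - (1 - cnj z * y) * g y) z)"
  have "b1 * cnj b1 = 1"
    using b1(2) by (metis complex_norm_square norm_one of_real_1 power_one)
  have eq: "eventually (\<lambda>z. (deriv b z - b1 * g z) * den z = defect z - g z * (cnj z - b1 * cnj (b z))) F"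
    using eventually_in_disc
  proof eventually_elim
    case (elim z)
    have "deriv g z = (g z - cnj b1 * deriv b z) / (1 - z)"
      using has_field_derivative_g[OF b1(1) elim] by (rule DERIV_imp_deriv)
    then show ?case
      unfolding den_def defect_def deriv_kernel_defect[OF g_holomorphic[OF b1(1)] elim]
      by (rule ssubst) (rule boundary_derivative_identity[OF \<open>b1 * cnj b1 = 1\<close>])
  qed
  have "((\<lambda>z. defect z - g z * (cnj z - b1 * cnj (b z))) \<longlongrightarrow> 0 - G * (cnj 1 - b1 * cnj b1)) F"
    unfolding defect_def by (intro tendsto_intros deriv_kernel_defect_tendsto_0[OF b1(1)] b1(1) G tendsto_one)
  then have "((\<lambda>z. defect z - g z * (cnj z - b1 * cnj (b z))) \<longlongrightarrow> 0) F"
    using \<open>b1 * cnj b1 = 1\<close> by simp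
  then have "((\<lambda>z. (deriv b z - b1 * g z) * den z) \<longlongrightarrow> 0) F"
    by (rule tendsto_cong[OF eq, THEN iffD2])
  have "((\<lambda>z. deriv b z - b1 * g z) \<longlongrightarrow> 0) F"
  proof (rule Lim_null_comparison)
    show "eventually (\<lambda>z. norm (deriv b z - b1 * g z) \<le> 2 * cmod ((deriv b z - b1 * g z) * den z)) F"
      using eventually_norm_boundary_denominator_ge[OF b1]
    proof eventually_elim
      case (elim z)
      have "norm (deriv b z - b1 * g z) * (1 / 2) \<le> norm (deriv b z - b1 * g z) * cmod (den z)"
        using elim unfolding den_def by (intro mult_left_mono) auto
      then show ?case
        unfolding norm_mult by simp
    qed
    show "((\<lambda>z. 2 * cmod ((deriv b z - b1 * g z) * den z)) \<longlongrightarrow> 0) F"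
      using tendsto_mult_left[OF tendsto_norm[OF \<open>((\<lambda>z. (deriv b z - b1 * g z) * den z) \<longlongrightarrow> 0) F\<close>], of 2]
      by simp
  qed
  then have "((\<lambda>z. (deriv b z - b1 * g z) + b1 * g z) \<longlongrightarrow> 0 + b1 * G) F"
    by (intro tendsto_intros G)
  then show ?thesis by simp
qed

end

lemma approach_region_at_1_filter:
  assumes "approach_region_at_1 \<Omega>"
  shows "at 1 within \<Omega> \<noteq> bot" and "eventually (\<lambda>z. z \<in> ball 0 1) (at 1 within \<Omega>)"
proof -
  have "\<Omega> \<subseteq> ball 0 1" and "1 \<in> frontier \<Omega>"
    using assms unfolding approach_region_at_1_def by blast+
  then have "1 \<in> closure \<Omega> - \<Omega>"
    by (auto simp: frontier_def)
  then show "at 1 within \<Omega> \<noteq> bot"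
    using trivial_limit_within[of 1 \<Omega>] by (auto simp: closure_def)
  have "eventually (\<lambda>z. z \<in> \<Omega>) (at 1 within \<Omega>)"
    by (simp add: eventually_at_filter)
  then show "eventually (\<lambda>z. z \<in> ball 0 1) (at 1 within \<Omega>)"
    by (rule eventually_mono) (use \<open>\<Omega> \<subseteq> ball 0 1\<close> in blast)
qed

theorem theoremD:
  fixes b :: "complex \<Rightarrow> complex" and \<Omega> :: "complex set"
  assumes "b holomorphic_on ball 0 1"
    and "b ` ball 0 1 \<subseteq> ball 0 1"
    and "approach_region_at_1 \<Omega>"
    and "\<exists>g. in_rkhs (hb_kernel b) g \<and>
           ((\<lambda>z. rkhs_norm (hb_kernel b) (\<lambda>w. hb_kernel b z w - g w)) \<longlongrightarrow> 0) (at 1 within \<Omega>)"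
  shows "\<exists>b1 db1. (b \<longlongrightarrow> b1) (at 1 within \<Omega>) \<and> (deriv b \<longlongrightarrow> db1) (at 1 within \<Omega>) \<and> cmod b1 = 1"
proof -
  obtain g where g: "in_rkhs (hb_kernel b) g"
    and lim: "((\<lambda>z. rkhs_norm (hb_kernel b) (\<lambda>w. hb_kernel b z w - g w)) \<longlongrightarrow> 0) (at 1 within \<Omega>)"
    using assms(4) by blast
  interpret boundary_kernel_limit b g "at 1 within \<Omega>"
  proof
    show "b holomorphic_on ball 0 1" "b ` ball 0 1 \<subseteq> ball 0 1"
      by (fact assms(1), fact assms(2))
    show "at 1 within \<Omega> \<noteq> bot" "eventually (\<lambda>z. z \<in> ball 0 1) (at 1 within \<Omega>)"
      using approach_region_at_1_filter[OF assms(3)] by blast+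
    show "((\<lambda>z. z) \<longlongrightarrow> 1) (at 1 within \<Omega>)"
      by (rule tendsto_ident_at)
  qed (fact g, fact lim)
  obtain b1 where "(b \<longlongrightarrow> b1) (at 1 within \<Omega>)" "cmod b1 = 1"
    by (rule tendsto_boundary_value)
  moreover obtain G where "(g \<longlongrightarrow> G) (at 1 within \<Omega>)"
    by (rule g_convergent)
  ultimately show ?thesis
    using deriv_tendsto by blast
qed

end
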